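(* Let $(\pi_1,\pi_2)$ be a chainable pair of patterns, $\pi_i=(a_i,b_i,c_i,d_i)$, and let $\mathcal{P}=\mathcal{P}(\mathbf{S}_{\pi_1},\mathbf{S}_{\pi_2})$. Then for each $P\in\mathcal{P}$: (1) $R_P=\operatorname{supp}(\mathbf{S}_{\pi_1}[:,i])$ and $C_P=\operatorname{supp}(\mathbf{S}_{\pi_2}[i,:])$ for every $i\in P$; (2) the sets $R_P\times C_P$, $P\in\mathcal{P}$, are pairwise disjoint; (3) $|P|=r(\pi_1,\pi_2)$, $|R_P|=b_1$ and $|C_P|=c_2$; (4) $\operatorname{supp}(\mathbf{S}_{\pi_1*\pi_2})=\operatorname{supp}(\mathbf{S}_{\pi_1}\mathbf{S}_{\pi_2})=\bigcup_{P\in\mathcal{P}}R_P\times C_P$.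
   Context: A pattern is a tuple $\pi=(a,b,c,d)$ of positive integers and $\mathbf{S}_\pi:=\mathbf{I}_a\otimes\mathbf{1}_{b\times c}\otimes\mathbf{I}_d\in\{0,1\}^{abd\times acd}$. Patterns $\pi_1,\pi_2$ are chainable if $a_1c_1/a_2=b_2d_2/d_1=:r(\pi_1,\pi_2)$ is an integer, $a_1\mid a_2$ and $d_2\mid d_1$; then $\pi_1*\pi_2:=(a_1,b_1d_1/d_2,a_2c_2/a_1,d_2)$. For binary matrices $\mathbf{L}\in\{0,1\}^{m\times r},\mathbf{R}\in\{0,1\}^{r\times n}$, let $\mathbf{U}_i:=\mathbf{L}[:,i]\mathbf{R}[i,:]\in\{0,1\}^{m\times n}$; the relation $i\sim j\iff\mathbf{U}_i=\mathbf{U}_j$ partitions $\{1,\dots,r\}$ into classes, the set of which is $\mathcal{P}(\mathbf{L},\mathbf{R})$; for a class $P$, $R_P\subseteq\{1,\dots,m\}$ and $C_P\subseteq\{1,\dots,n\}$ are such that the common support of $\mathbf{U}_i$, $i\in P$, equals $R_P\times C_P$. $\operatorname{supp}$ denotes the set of indices of nonzero entries. *)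

theory Defs
  imports "Jordan_Normal_Form.Matrix"
begin

type_synonym pattern = "nat \<times> nat \<times> nat \<times> nat"

definition is_pattern :: "pattern \<Rightarrow> bool" where
  "is_pattern \<pi> = (case \<pi> of (a, b, c, d) \<Rightarrow> 0 < a \<and> 0 < b \<and> 0 < c \<and> 0 < d)"

definition kron :: "nat mat \<Rightarrow> nat mat \<Rightarrow> nat mat" where
  "kron A B = mat (dim_row A * dim_row B) (dim_col A * dim_col B)
     (\<lambda>(i, j). A $$ (i div dim_row B, j div dim_col B) * B $$ (i mod dim_row B, j mod dim_col B))"

definition ones_mat :: "nat \<Rightarrow> nat \<Rightarrow> nat mat" where
  "ones_mat m n = mat m n (\<lambda>_. 1)"

definition S_pat :: "pattern \<Rightarrow> nat mat" where
  "S_pat \<pi> = (case \<pi> of (a, b, c, d) \<Rightarrow> kron (kron (1\<^sub>m a) (ones_mat b c)) (1\<^sub>m d))"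

definition chainable :: "pattern \<Rightarrow> pattern \<Rightarrow> bool" where
  "chainable \<pi>1 \<pi>2 = (case \<pi>1 of (a1, b1, c1, d1) \<Rightarrow> case \<pi>2 of (a2, b2, c2, d2) \<Rightarrow>
     a2 dvd a1 * c1 \<and> d1 dvd b2 * d2 \<and> a1 * c1 div a2 = b2 * d2 div d1 \<and> a1 dvd a2 \<and> d2 dvd d1)"

definition r_ratio :: "pattern \<Rightarrow> pattern \<Rightarrow> nat" where
  "r_ratio \<pi>1 \<pi>2 = (case \<pi>1 of (a1, b1, c1, d1) \<Rightarrow> case \<pi>2 of (a2, b2, c2, d2) \<Rightarrow> a1 * c1 div a2)"

definition pat_comp :: "pattern \<Rightarrow> pattern \<Rightarrow> pattern" where
  "pat_comp \<pi>1 \<pi>2 = (case \<pi>1 of (a1, b1, c1, d1) \<Rightarrow> case \<pi>2 of (a2, b2, c2, d2) \<Rightarrow>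
     (a1, b1 * d1 div d2, a2 * c2 div a1, d2))"

definition mat_supp :: "nat mat \<Rightarrow> (nat \<times> nat) set" where
  "mat_supp A = {(i, j). i < dim_row A \<and> j < dim_col A \<and> A $$ (i, j) \<noteq> 0}"

definition col_supp :: "nat mat \<Rightarrow> nat \<Rightarrow> nat set" where
  "col_supp A k = {i. i < dim_row A \<and> A $$ (i, k) \<noteq> 0}"

definition row_supp :: "nat mat \<Rightarrow> nat \<Rightarrow> nat set" where
  "row_supp A k = {j. j < dim_col A \<and> A $$ (k, j) \<noteq> 0}"

definition U_mat :: "nat mat \<Rightarrow> nat mat \<Rightarrow> nat \<Rightarrow> nat mat" where
  "U_mat L R i = mat (dim_row L) (dim_col R) (\<lambda>(p, q). L $$ (p, i) * R $$ (i, q))"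

definition U_classes :: "nat mat \<Rightarrow> nat mat \<Rightarrow> nat set set" where
  "U_classes L R = (\<lambda>i. {j. j < dim_col L \<and> U_mat L R j = U_mat L R i}) ` {..<dim_col L}"

definition R_cls :: "nat mat \<Rightarrow> nat mat \<Rightarrow> nat set \<Rightarrow> nat set" where
  "R_cls L R P = fst ` mat_supp (U_mat L R (SOME i. i \<in> P))"

definition C_cls :: "nat mat \<Rightarrow> nat mat \<Rightarrow> nat set \<Rightarrow> nat set" where
  "C_cls L R P = snd ` mat_supp (U_mat L R (SOME i. i \<in> P))"

end

theory Submission
  imports Defs
begin

(* Write the row and column indices of S_(a,b,c,d) in mixed radix, i = (alpha, beta, delta) in
   [a] x [b] x [d] and j = (alpha', gamma, delta') in [a] x [c] x [d]; then S has a one at (i, j)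
   exactly when the outer digits alpha = alpha' and the inner digits delta = delta' agree.
   Consequently the column supports of S_pi1 and the row supports of S_pi2 are blocks of sizes
   b1 and c2 that are pairwise equal or disjoint. For 0/1 factors the outer product U_k is
   determined by the pair of supports of column k of L and row k of R, which gives (1), (2) and
   the second half of (4) for any such factorization.
   For a chainable pair write a2 = a1 e, d1 = f d2, c1 = e r and b2 = f r. The class of an inner
   index k then consists of the indices that agree with k in every digit except one digit of
   radix r, so it has r elements; and eliminating the inner index from the two digit relations
   leaves exactly the digit relation of pi1 * pi2 = (a1, b1 f, e c2, d2). *)

definition binary_mat :: "nat mat \<Rightarrow> bool" where
  "binary_mat A \<longleftrightarrow> (\<forall>i < dim_row A. \<forall>j < dim_col A. A $$ (i, j) \<le> 1)"

lemma binary_mat_eqI: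
  assumes "binary_mat A" "binary_mat B" "dim_row A = dim_row B" "dim_col A = dim_col B"
    and "mat_supp A = mat_supp B"
  shows "A = B"
proof (rule eq_matI)
  fix i j assume ij: "i < dim_row B" "j < dim_col B"
  have "(i, j) \<in> mat_supp A \<longleftrightarrow> (i, j) \<in> mat_supp B"
    using assms(5) by simp
  then have "A $$ (i, j) \<noteq> 0 \<longleftrightarrow> B $$ (i, j) \<noteq> 0"
    using assms(3,4) ij by (simp add: mat_supp_def)
  moreover have "A $$ (i, j) \<le> 1" "B $$ (i, j) \<le> 1"
    using assms(1-4) ij unfolding binary_mat_def by auto
  ultimately show "A $$ (i, j) = B $$ (i, j)" by linarith
qed (use assms in auto)

lemma U_mat_dims [simp]:
  "dim_row (U_mat L R k) = dim_row L" "dim_col (U_mat L R k) = dim_col R"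
  by (simp_all add: U_mat_def)

lemma mat_supp_U_mat: "mat_supp (U_mat L R k) = col_supp L k \<times> row_supp R k"
  by (auto simp: mat_supp_def col_supp_def row_supp_def U_mat_def)

lemma mat_supp_mult:
  assumes "dim_col L = dim_row R"
  shows "mat_supp (L * R) = (\<Union>k < dim_col L. col_supp L k \<times> row_supp R k)"
proof -
  have "(L * R) $$ (p, q) \<noteq> 0 \<longleftrightarrow> (\<exists>k < dim_col L. L $$ (p, k) \<noteq> 0 \<and> R $$ (k, q) \<noteq> 0)"
    if "p < dim_row L" "q < dim_col R" for p q
    using that assms by (auto simp: scalar_prod_def)
  then show ?thesis
    using assms unfolding mat_supp_def col_supp_def row_supp_def by auto
qed

lemma U_classes_mem:
  assumes "P \<in> U_classes L R" "i \<in> P"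
  shows "i < dim_col L" "j \<in> P \<longleftrightarrow> j < dim_col L \<and> U_mat L R j = U_mat L R i"
  using assms by (auto simp: U_classes_def)

lemma R_cls_C_cls_if_supps_nonempty:
  assumes "P \<in> U_classes L R" "i \<in> P" "col_supp L i \<noteq> {}" "row_supp R i \<noteq> {}"
  shows "R_cls L R P = col_supp L i" "C_cls L R P = row_supp R i"
proof -
  have "(SOME j. j \<in> P) \<in> P" using assms(2) by (rule someI)
  then have "U_mat L R (SOME j. j \<in> P) = U_mat L R i"
    using U_classes_mem[OF assms(1,2)] by blast
  then show "R_cls L R P = col_supp L i" "C_cls L R P = row_supp R i"
    using assms(3,4) by (simp_all add: R_cls_def C_cls_def mat_supp_U_mat)
qed

locale binary_factorization =
  fixes L R :: "nat mat"
  assumes binary_L: "binary_mat L" and binary_R: "binary_mat R"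
    and inner_dim: "dim_col L = dim_row R"
    and col_supp_nonempty: "k < dim_col L \<Longrightarrow> col_supp L k \<noteq> {}"
    and row_supp_nonempty: "k < dim_col L \<Longrightarrow> row_supp R k \<noteq> {}"
begin

lemma binary_U_mat:
  assumes "k < dim_col L"
  shows "binary_mat (U_mat L R k)"
  unfolding binary_mat_def
proof (intro allI impI)
  fix p q assume pq: "p < dim_row (U_mat L R k)" "q < dim_col (U_mat L R k)"
  then have "L $$ (p, k) \<le> 1" "R $$ (k, q) \<le> 1"
    using assms binary_L binary_R inner_dim unfolding binary_mat_def by auto
  moreover have "U_mat L R k $$ (p, q) = L $$ (p, k) * R $$ (k, q)"
    using pq by (simp add: U_mat_def)
  ultimately show "U_mat L R k $$ (p, q) \<le> 1"
    using mult_le_mono[of "L $$ (p, k)" 1 "R $$ (k, q)" 1] by simp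
qed

lemma U_mat_eq_iff:
  assumes "j < dim_col L" "k < dim_col L"
  shows "U_mat L R j = U_mat L R k \<longleftrightarrow> col_supp L j = col_supp L k \<and> row_supp R j = row_supp R k"
proof
  assume "U_mat L R j = U_mat L R k"
  then have "col_supp L j \<times> row_supp R j = col_supp L k \<times> row_supp R k"
    by (metis mat_supp_U_mat)
  then show "col_supp L j = col_supp L k \<and> row_supp R j = row_supp R k"
    using col_supp_nonempty[OF assms(1)] row_supp_nonempty[OF assms(1)] by (simp add: times_eq_iff)
next
  assume "col_supp L j = col_supp L k \<and> row_supp R j = row_supp R k"
  then show "U_mat L R j = U_mat L R k"
    using assms by (intro binary_mat_eqI binary_U_mat) (simp_all add: mat_supp_U_mat)
qed

lemma U_classes_eq:
  "U_classes L R = (\<lambda>k. {j. j < dim_col L \<and> col_supp L j = col_supp L k \<and> row_supp R j = row_supp R k})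
     ` {..<dim_col L}"
proof -
  have "{j. j < dim_col L \<and> U_mat L R j = U_mat L R k} =
      {j. j < dim_col L \<and> col_supp L j = col_supp L k \<and> row_supp R j = row_supp R k}"
    if "k < dim_col L" for k
    using U_mat_eq_iff that by blast
  then show ?thesis unfolding U_classes_def by (rule image_cong[OF refl]) simp
qed

lemma R_cls_C_cls:
  assumes "P \<in> U_classes L R" "i \<in> P"
  shows "R_cls L R P = col_supp L i" "C_cls L R P = row_supp R i"
proof -
  have "i < dim_col L" using assms by (rule U_classes_mem)
  then show "R_cls L R P = col_supp L i" "C_cls L R P = row_supp R i"
    by (simp_all add: R_cls_C_cls_if_supps_nonempty[OF assms] col_supp_nonempty row_supp_nonempty)
qed

lemma U_classesE:
  assumes "P \<in> U_classes L R"
  obtains i where "i \<in> P" "i < dim_col L" "R_cls L R P = col_supp L i" "C_cls L R P = row_supp R i"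
proof -
  obtain i where "i \<in> P" using assms by (auto simp: U_classes_def)
  then show thesis using that R_cls_C_cls[OF assms] U_classes_mem(1)[OF assms] by blast
qed

lemma mat_supp_mult_U_classes:
  "mat_supp (L * R) = (\<Union>P \<in> U_classes L R. R_cls L R P \<times> C_cls L R P)"
proof -
  have "(\<Union>P \<in> U_classes L R. R_cls L R P \<times> C_cls L R P) =
      (\<Union>k < dim_col L. col_supp L k \<times> row_supp R k)"
  proof (intro equalityI subsetI)
    fix x assume "x \<in> (\<Union>P \<in> U_classes L R. R_cls L R P \<times> C_cls L R P)"
    then obtain P where P: "P \<in> U_classes L R" "x \<in> R_cls L R P \<times> C_cls L R P" by blast
    obtain k where "k \<in> P" "k < dim_col L" "R_cls L R P = col_supp L k" "C_cls L R P = row_supp R k"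
      using P(1) by (rule U_classesE)
    then show "x \<in> (\<Union>k < dim_col L. col_supp L k \<times> row_supp R k)"
      using P(2) by blast
  next
    fix x assume "x \<in> (\<Union>k < dim_col L. col_supp L k \<times> row_supp R k)"
    then obtain k where k: "k < dim_col L" "x \<in> col_supp L k \<times> row_supp R k" by blast
    let ?P = "{j. j < dim_col L \<and> U_mat L R j = U_mat L R k}"
    have P: "?P \<in> U_classes L R" "k \<in> ?P" using k(1) by (auto simp: U_classes_def)
    then show "x \<in> (\<Union>P \<in> U_classes L R. R_cls L R P \<times> C_cls L R P)"
      using k(2) R_cls_C_cls[OF P] by blast
  qed
  then show ?thesis using mat_supp_mult[OF inner_dim] by simp
qed

lemma U_classes_disjoint:
  assumes col_partition: "\<And>j k. j < dim_col L \<Longrightarrow> k < dim_col L \<Longrightarrow>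
      col_supp L j \<inter> col_supp L k \<noteq> {} \<Longrightarrow> col_supp L j = col_supp L k"
    and row_partition: "\<And>j k. j < dim_col L \<Longrightarrow> k < dim_col L \<Longrightarrow>
      row_supp R j \<inter> row_supp R k \<noteq> {} \<Longrightarrow> row_supp R j = row_supp R k"
    and "P \<in> U_classes L R" "Q \<in> U_classes L R" "P \<noteq> Q"
  shows "(R_cls L R P \<times> C_cls L R P) \<inter> (R_cls L R Q \<times> C_cls L R Q) = {}"
proof -
  obtain j k where jk: "j < dim_col L" "k < dim_col L"
    and P: "P = {i. i < dim_col L \<and> U_mat L R i = U_mat L R j}"
    and Q: "Q = {i. i < dim_col L \<and> U_mat L R i = U_mat L R k}"
    using assms(3,4) unfolding U_classes_def by blast
  then have "j \<in> P" "k \<in> Q" by simp_all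
  have "col_supp L j \<inter> col_supp L k = {} \<or> row_supp R j \<inter> row_supp R k = {}"
  proof (rule ccontr)
    assume "\<not> ?thesis"
    then have "U_mat L R j = U_mat L R k"
      using U_mat_eq_iff[OF jk] col_partition[OF jk] row_partition[OF jk] by blast
    then show False using \<open>P \<noteq> Q\<close> P Q by simp
  qed
  then show ?thesis
    using R_cls_C_cls[OF assms(3) \<open>j \<in> P\<close>] R_cls_C_cls[OF assms(4) \<open>k \<in> Q\<close>] by blast
qed

end

lemma dim_kron [simp]:
  "dim_row (kron A B) = dim_row A * dim_row B" "dim_col (kron A B) = dim_col A * dim_col B"
  by (simp_all add: kron_def)

lemma index_kron:
  assumes "i < dim_row A * dim_row B" "j < dim_col A * dim_col B"
  shows "kron A B $$ (i, j) =
    A $$ (i div dim_row B, j div dim_col B) * B $$ (i mod dim_row B, j mod dim_col B)"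
  using assms by (simp add: kron_def)

definition pat_rel :: "nat \<Rightarrow> nat \<Rightarrow> nat \<Rightarrow> nat \<Rightarrow> nat \<Rightarrow> bool" where
  "pat_rel b c d i j \<longleftrightarrow> i div (b * d) = j div (c * d) \<and> i mod d = j mod d"

lemma S_pat_dims [simp]:
  "dim_row (S_pat (a, b, c, d)) = a * b * d" "dim_col (S_pat (a, b, c, d)) = a * c * d"
  by (simp_all add: S_pat_def ones_mat_def)

lemma S_pat_index:
  assumes "i < a * b * d" "j < a * c * d"
  shows "S_pat (a, b, c, d) $$ (i, j) = (if pat_rel b c d i j then 1 else 0)"
proof -
  have "0 < d" using assms(1) by (cases d) auto
  then have i: "i div d < a * b" and j: "j div d < a * c"
    using assms by (simp_all add: div_less_iff_less_mult)
  have "0 < b" using i by (cases b) auto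
  have "0 < c" using j by (cases c) auto
  have "i div d div b < a" "j div d div c < a"
    using i j \<open>0 < b\<close> \<open>0 < c\<close> by (simp_all add: div_less_iff_less_mult)
  have "S_pat (a, b, c, d) $$ (i, j) =
      kron (1\<^sub>m a) (ones_mat b c) $$ (i div d, j div d) * 1\<^sub>m d $$ (i mod d, j mod d)"
    using assms by (simp add: S_pat_def index_kron ones_mat_def)
  also have "kron (1\<^sub>m a) (ones_mat b c) $$ (i div d, j div d) = 1\<^sub>m a $$ (i div d div b, j div d div c)"
    using i j \<open>0 < b\<close> \<open>0 < c\<close> by (simp add: index_kron ones_mat_def)
  finally have "S_pat (a, b, c, d) $$ (i, j) =
      (if i div d div b = j div d div c \<and> i mod d = j mod d then 1 else 0)"
    using \<open>i div d div b < a\<close> \<open>j div d div c < a\<close> \<open>0 < d\<close> by simp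
  moreover have "i div (b * d) = i div d div b" "j div (c * d) = j div d div c"
    by (metis div_mult2_eq mult.commute)+
  ultimately show ?thesis by (simp add: pat_rel_def)
qed

lemma binary_S_pat: "binary_mat (S_pat (a, b, c, d))"
  by (simp add: binary_mat_def S_pat_index)

lemma mat_supp_S_pat:
  "mat_supp (S_pat (a, b, c, d)) = {(i, j). i < a * b * d \<and> j < a * c * d \<and> pat_rel b c d i j}"
  by (auto simp: mat_supp_def S_pat_index split: if_splits)

lemma col_supp_S_pat:
  assumes "k < a * c * d"
  shows "col_supp (S_pat (a, b, c, d)) k = {i. i < a * b * d \<and> pat_rel b c d i k}"
  using assms by (auto simp: col_supp_def S_pat_index split: if_splits)

lemma row_supp_S_pat:
  assumes "k < a * b * d"
  shows "row_supp (S_pat (a, b, c, d)) k = {j. j < a * c * d \<and> pat_rel b c d k j}"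
  using assms by (auto simp: row_supp_def S_pat_index split: if_splits)

lemma row_supp_S_pat_eq_col_supp:
  assumes "k < a * b * d"
  shows "row_supp (S_pat (a, b, c, d)) k = col_supp (S_pat (a, c, b, d)) k"
  using assms by (auto simp: row_supp_S_pat col_supp_S_pat pat_rel_def)

lemma card_digit_block:
  assumes "\<alpha> < A" "s < D"
  shows "card {p. p < A * B * D \<and> p div (B * D) = \<alpha> \<and> p mod D = s} = B"
proof -
  define f where "f u = (\<alpha> * B + u) * D + s" for u
  have div_BD: "p div (B * D) = p div D div B" for p
    by (metis div_mult2_eq mult.commute)
  have "{p. p < A * B * D \<and> p div (B * D) = \<alpha> \<and> p mod D = s} = f ` {..<B}"
  proof (intro equalityI subsetI)
    fix p assume "p \<in> {p. p < A * B * D \<and> p div (B * D) = \<alpha> \<and> p mod D = s}"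
    then have p: "p < A * B * D" "p div D div B = \<alpha>" "p mod D = s"
      by (simp_all add: div_BD)
    have "p = (p div D div B * B + p div D mod B) * D + p mod D" by simp
    then have "p = f (p div D mod B)" using p(2,3) by (simp add: f_def)
    moreover have "0 < B" using p(1) by (cases B) auto
    ultimately show "p \<in> f ` {..<B}" by auto
  next
    fix p assume "p \<in> f ` {..<B}"
    then obtain u where u: "u < B" "p = f u" by blast
    then have "p div D = \<alpha> * B + u" "p mod D = s" using assms(2) by (simp_all add: f_def)
    then have "p div (B * D) = \<alpha>" using u(1) by (simp add: div_BD)
    moreover have "p < A * B * D"
    proof -
      have "0 < B * D" using u(1) assms(2) by simp
      moreover have "p div (B * D) < A" using \<open>p div (B * D) = \<alpha>\<close> assms(1) by simp
      ultimately show ?thesis by (simp add: div_less_iff_less_mult mult.assoc)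
    qed
    ultimately show "p \<in> {p. p < A * B * D \<and> p div (B * D) = \<alpha> \<and> p mod D = s}"
      using \<open>p mod D = s\<close> by simp
  qed
  moreover have "inj_on f {..<B}"
    using assms(2) by (auto simp: inj_on_def f_def)
  ultimately show ?thesis by (simp add: card_image)
qed

lemma card_col_supp_S_pat:
  assumes "k < a * c * d"
  shows "card (col_supp (S_pat (a, b, c, d)) k) = b"
proof -
  have "0 < c * d" using assms by (cases "c * d") auto
  then have "k div (c * d) < a" "k mod d < d"
    using assms by (simp_all add: div_less_iff_less_mult mult.assoc)
  then show ?thesis
    by (simp add: col_supp_S_pat[OF assms] pat_rel_def card_digit_block)
qed

lemma card_row_supp_S_pat:
  assumes "k < a * b * d"
  shows "card (row_supp (S_pat (a, b, c, d)) k) = c"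
  using assms by (simp add: row_supp_S_pat_eq_col_supp card_col_supp_S_pat)

lemma col_supp_S_pat_overlap:
  assumes "j < a * c * d" "k < a * c * d"
    and "col_supp (S_pat (a, b, c, d)) j \<inter> col_supp (S_pat (a, b, c, d)) k \<noteq> {}"
  shows "j div (c * d) = k div (c * d) \<and> j mod d = k mod d"
  using assms by (auto simp: col_supp_S_pat pat_rel_def)

lemma col_supp_S_pat_partition:
  assumes "j < a * c * d" "k < a * c * d"
    and "col_supp (S_pat (a, b, c, d)) j \<inter> col_supp (S_pat (a, b, c, d)) k \<noteq> {}"
  shows "col_supp (S_pat (a, b, c, d)) j = col_supp (S_pat (a, b, c, d)) k"
  using col_supp_S_pat_overlap[OF assms] assms(1,2) by (simp add: col_supp_S_pat pat_rel_def)

lemma row_supp_S_pat_partition: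
  assumes "j < a * b * d" "k < a * b * d"
    and "row_supp (S_pat (a, b, c, d)) j \<inter> row_supp (S_pat (a, b, c, d)) k \<noteq> {}"
  shows "row_supp (S_pat (a, b, c, d)) j = row_supp (S_pat (a, b, c, d)) k"
  using assms col_supp_S_pat_partition by (simp add: row_supp_S_pat_eq_col_supp)

lemma col_supp_S_pat_eq_iff:
  assumes "j < a * c * d" "k < a * c * d" "0 < b"
  shows "col_supp (S_pat (a, b, c, d)) j = col_supp (S_pat (a, b, c, d)) k \<longleftrightarrow>
    j div (c * d) = k div (c * d) \<and> j mod d = k mod d"
proof
  assume eq: "col_supp (S_pat (a, b, c, d)) j = col_supp (S_pat (a, b, c, d)) k"
  have "col_supp (S_pat (a, b, c, d)) k \<noteq> {}"
    using card_col_supp_S_pat[OF assms(2), where b = b] assms(3) by auto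
  then show "j div (c * d) = k div (c * d) \<and> j mod d = k mod d"
    using col_supp_S_pat_overlap[OF assms(1,2), where b = b] eq by simp
next
  assume "j div (c * d) = k div (c * d) \<and> j mod d = k mod d"
  then show "col_supp (S_pat (a, b, c, d)) j = col_supp (S_pat (a, b, c, d)) k"
    using assms(1,2) by (simp add: col_supp_S_pat pat_rel_def)
qed

lemma row_supp_S_pat_eq_iff:
  assumes "j < a * b * d" "k < a * b * d" "0 < c"
  shows "row_supp (S_pat (a, b, c, d)) j = row_supp (S_pat (a, b, c, d)) k \<longleftrightarrow>
    j div (b * d) = k div (b * d) \<and> j mod d = k mod d"
  using assms by (simp add: row_supp_S_pat_eq_col_supp col_supp_S_pat_eq_iff)

lemma binary_factorization_S_pat:
  assumes "is_pattern (a1, b1, c1, d1)" "is_pattern (a2, b2, c2, d2)" "a1 * c1 * d1 = a2 * b2 * d2"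
  shows "binary_factorization (S_pat (a1, b1, c1, d1)) (S_pat (a2, b2, c2, d2))"
proof unfold_locales
  fix k assume "k < dim_col (S_pat (a1, b1, c1, d1))"
  then have "card (col_supp (S_pat (a1, b1, c1, d1)) k) = b1"
    and "card (row_supp (S_pat (a2, b2, c2, d2)) k) = c2"
    using assms(3) by (simp_all add: card_col_supp_S_pat card_row_supp_S_pat)
  then show "col_supp (S_pat (a1, b1, c1, d1)) k \<noteq> {}" "row_supp (S_pat (a2, b2, c2, d2)) k \<noteq> {}"
    using assms(1,2) by (auto simp: is_pattern_def)
qed (simp_all add: binary_S_pat assms(3))

lemma chainable_patternE:
  assumes "is_pattern (a1, b1, c1, d1)" "is_pattern (a2, b2, c2, d2)"
    and "chainable (a1, b1, c1, d1) (a2, b2, c2, d2)"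
  obtains e f where "a2 = a1 * e" "d1 = f * d2"
    and "c1 = e * r_ratio (a1, b1, c1, d1) (a2, b2, c2, d2)"
    and "b2 = f * r_ratio (a1, b1, c1, d1) (a2, b2, c2, d2)"
proof -
  define r where "r = a1 * c1 div a2"
  have pos: "0 < a1" "0 < d2" using assms(1,2) by (simp_all add: is_pattern_def)
  have ch: "a2 dvd a1 * c1" "d1 dvd b2 * d2" "r = b2 * d2 div d1" "a1 dvd a2" "d2 dvd d1"
    using assms(3) by (simp_all add: chainable_def r_def)
  obtain e where e: "a2 = a1 * e" using ch(4) by (rule dvdE)
  obtain f where f: "d1 = f * d2" using ch(5) by (metis dvdE mult.commute)
  have "a1 * c1 = a2 * r"
    unfolding r_def by (rule dvd_mult_div_cancel[symmetric, OF ch(1)])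
  then have c1: "c1 = e * r" using pos(1) e by (simp add: mult.assoc)
  have "b2 * d2 = d1 * r"
    unfolding ch(3) by (rule dvd_mult_div_cancel[symmetric, OF ch(2)])
  then have "b2 * d2 = (f * r) * d2" using f by (simp add: ac_simps)
  then have b2: "b2 = f * r" using pos(2) by simp
  have "r_ratio (a1, b1, c1, d1) (a2, b2, c2, d2) = r" by (simp add: r_ratio_def r_def)
  then show thesis using that[OF e f] c1 b2 by simp
qed

lemma digits_coarsen:
  fixes j k e D f d :: nat
  shows "(j div (e * D) = k div (e * D) \<and> j mod (f * d) = k mod (f * d) \<and>
      j div D = k div D \<and> j mod d = k mod d) \<longleftrightarrow>
    (j div D = k div D \<and> j mod (f * d) = k mod (f * d))"
proof -
  have "x div (e * D) = x div D div e" for x :: nat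
    by (metis div_mult2_eq mult.commute)
  moreover have "x mod d = x mod (f * d) mod d" for x :: nat
    by (simp add: mod_mod_cancel)
  ultimately show ?thesis by metis
qed

lemma card_U_classes_S_pat_chain:
  assumes "0 < a" "0 < b" "0 < c" "0 < d" "0 < e" "0 < f" "0 < r"
    and "P \<in> U_classes (S_pat (a, b, e * r, f * d)) (S_pat (a * e, f * r, c, d))"
  shows "card P = r"
proof -
  let ?L = "S_pat (a, b, e * r, f * d)" and ?R = "S_pat (a * e, f * r, c, d)"
  define N where "N = a * e * r * (f * d)"
  have dims: "a * (e * r) * (f * d) = N" "a * e * (f * r) * d = N" by (simp_all add: N_def ac_simps)
  have radix: "e * r * (f * d) = e * (r * (f * d))" "f * r * d = r * (f * d)" by (simp_all add: ac_simps)
  interpret binary_factorization ?L ?R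
    using assms(1-7) dims by (intro binary_factorization_S_pat) (simp_all add: is_pattern_def)
  obtain k where k: "k < N"
    and P: "P = {j. j < N \<and> col_supp ?L j = col_supp ?L k \<and> row_supp ?R j = row_supp ?R k}"
    using assms(8) dims(1) unfolding U_classes_eq by auto
  have "col_supp ?L j = col_supp ?L k \<and> row_supp ?R j = row_supp ?R k \<longleftrightarrow>
      j div (r * (f * d)) = k div (r * (f * d)) \<and> j mod (f * d) = k mod (f * d)" if "j < N" for j
    using col_supp_S_pat_eq_iff[of j a "e * r" "f * d" k b] row_supp_S_pat_eq_iff[of j "a * e" "f * r" d k c]
      that k assms(2,3) dims radix digits_coarsen[of j e "r * (f * d)" k f d]
    by simp
  then have "P = {j. j < a * e * r * (f * d) \<and> j div (r * (f * d)) = k div (r * (f * d)) \<and>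
      j mod (f * d) = k mod (f * d)}"
    unfolding P N_def by blast
  moreover have "k div (r * (f * d)) < a * e" "k mod (f * d) < f * d"
    using k assms(4,6,7) by (simp_all add: N_def div_less_iff_less_mult mult.assoc)
  ultimately show ?thesis by (simp add: card_digit_block)
qed

lemma pat_rel_chain_iff:
  assumes "q < a * e * c * d" "0 < f" "0 < r"
  shows "(\<exists>k < a * e * (f * r) * d. pat_rel b (e * r) (f * d) p k \<and> pat_rel (f * r) c d k q) \<longleftrightarrow>
    pat_rel (b * f) (e * c) d p q"
proof -
  have div_e: "x div (e * r * (f * d)) = x div (f * r * d) div e" for x
    by (metis div_mult2_eq mult.commute mult.assoc mult.left_commute)
  have div_ec: "q div (e * c * d) = q div (c * d) div e"
    by (metis div_mult2_eq mult.commute mult.assoc)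
  have mod_d: "x mod d = x mod (f * d) mod d" for x
    by (simp add: mod_mod_cancel)
  show ?thesis
  proof
    assume "\<exists>k < a * e * (f * r) * d. pat_rel b (e * r) (f * d) p k \<and> pat_rel (f * r) c d k q"
    then obtain k where k: "p div (b * (f * d)) = k div (e * r * (f * d))" "p mod (f * d) = k mod (f * d)"
      "k div (f * r * d) = q div (c * d)" "k mod d = q mod d"
      unfolding pat_rel_def by blast
    have "p div (b * f * d) = k div (e * r * (f * d))" using k(1) by (simp add: mult.assoc)
    also have "\<dots> = q div (e * c * d)" using k(3) by (simp add: div_e div_ec)
    finally have "p div (b * f * d) = q div (e * c * d)" .
    moreover have "p mod d = q mod d" using k(2,4) mod_d by metis
    ultimately show "pat_rel (b * f) (e * c) d p q" by (simp add: pat_rel_def)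
  next
    assume "pat_rel (b * f) (e * c) d p q"
    then have pq: "p div (b * f * d) = q div (e * c * d)" and pq_mod: "p mod d = q mod d"
      by (simp_all add: pat_rel_def)
    have "p div (b * (f * d)) = p div (b * f * d)" by (simp add: mult.assoc)
    with pq have pq_div: "p div (b * (f * d)) = q div (c * d) div e"
      by (simp add: div_ec)
    have "0 < c * d" using assms(1) by (cases "c * d") auto
    define k where "k = q div (c * d) * (f * r * d) + p mod (f * d)"
    have "p mod (f * d) < f * d" using \<open>0 < c * d\<close> assms(2) by simp
    also have "f * d \<le> f * r * d" using assms(3) by simp
    finally have small: "p mod (f * d) < f * r * d" .
    then have k_div: "k div (f * r * d) = q div (c * d)"
      using assms(2,3) \<open>0 < c * d\<close> by (simp add: k_def)
    have "k = p mod (f * d) + q div (c * d) * r * (f * d)" by (simp add: k_def ac_simps)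
    then have k_mod: "k mod (f * d) = p mod (f * d)" by simp
    have "q div (c * d) < a * e"
      using assms(1) \<open>0 < c * d\<close> by (simp add: div_less_iff_less_mult mult.assoc)
    have "k < (q div (c * d) + 1) * (f * r * d)"
      using small by (simp add: k_def algebra_simps)
    also have "\<dots> \<le> a * e * (f * r * d)"
      using \<open>q div (c * d) < a * e\<close> by (intro mult_right_mono) auto
    finally have "k < a * e * (f * r * d)" .
    moreover have "pat_rel b (e * r) (f * d) p k"
      using pq_div k_div k_mod by (simp add: pat_rel_def div_e)
    moreover have "pat_rel (f * r) c d k q"
      using pq_mod k_div k_mod mod_d by (simp add: pat_rel_def) (metis mod_d)
    ultimately show "\<exists>k < a * e * (f * r) * d. pat_rel b (e * r) (f * d) p k \<and> pat_rel (f * r) c d k q"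
      by (auto simp: mult.assoc)
  qed
qed

lemma mat_supp_S_pat_mult_chain:
  assumes "0 < f" "0 < r"
  shows "mat_supp (S_pat (a, b, e * r, f * d) * S_pat (a * e, f * r, c, d)) =
    mat_supp (S_pat (a, b * f, e * c, d))"
proof -
  let ?L = "S_pat (a, b, e * r, f * d)" and ?R = "S_pat (a * e, f * r, c, d)"
  define N where "N = a * e * (f * r) * d"
  have dims: "a * (e * r) * (f * d) = N" "a * e * (f * r) * d = N" by (simp_all add: N_def ac_simps)
  have "col_supp ?L k \<times> row_supp ?R k = {(p, q). p < a * b * (f * d) \<and> q < a * e * c * d \<and>
      pat_rel b (e * r) (f * d) p k \<and> pat_rel (f * r) c d k q}" if "k < N" for k
    using that dims by (auto simp: col_supp_S_pat row_supp_S_pat)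
  then have "mat_supp (?L * ?R) = {(p, q). p < a * b * (f * d) \<and> q < a * e * c * d \<and>
      (\<exists>k < N. pat_rel b (e * r) (f * d) p k \<and> pat_rel (f * r) c d k q)}"
    using mat_supp_mult[of ?L ?R] dims by auto
  also have "\<dots> = {(p, q). p < a * (b * f) * d \<and> q < a * (e * c) * d \<and> pat_rel (b * f) (e * c) d p q}"
  proof -
    have "(\<exists>k < N. pat_rel b (e * r) (f * d) p k \<and> pat_rel (f * r) c d k q) \<longleftrightarrow>
        pat_rel (b * f) (e * c) d p q" if "q < a * (e * c) * d" for p q
    proof -
      have "q < a * e * c * d" using that by (simp add: mult.assoc)
      then show ?thesis unfolding N_def by (rule pat_rel_chain_iff[OF _ assms])
    qed
    moreover have bounds: "a * b * (f * d) = a * (b * f) * d" "a * e * c * d = a * (e * c) * d"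
      by (simp_all add: ac_simps)
    ultimately show ?thesis unfolding bounds by auto
  qed
  finally show ?thesis by (simp add: mat_supp_S_pat)
qed

theorem lemma4p6:
  fixes a1 b1 c1 d1 a2 b2 c2 d2 :: nat
  assumes "is_pattern (a1, b1, c1, d1)" and "is_pattern (a2, b2, c2, d2)"
    and "chainable (a1, b1, c1, d1) (a2, b2, c2, d2)"
  defines "L \<equiv> S_pat (a1, b1, c1, d1)" and "R \<equiv> S_pat (a2, b2, c2, d2)"
  shows "(\<forall>P \<in> U_classes L R. \<forall>i \<in> P.
            mat_supp (U_mat L R i) = R_cls L R P \<times> C_cls L R P \<and>
            R_cls L R P = col_supp L i \<and> C_cls L R P = row_supp R i) \<and>
    (\<forall>P \<in> U_classes L R. \<forall>Q \<in> U_classes L R. P \<noteq> Q \<longrightarrow>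
            (R_cls L R P \<times> C_cls L R P) \<inter> (R_cls L R Q \<times> C_cls L R Q) = {}) \<and>
    (\<forall>P \<in> U_classes L R. card P = r_ratio (a1, b1, c1, d1) (a2, b2, c2, d2) \<and>
            card (R_cls L R P) = b1 \<and> card (C_cls L R P) = c2) \<and>
    mat_supp (S_pat (pat_comp (a1, b1, c1, d1) (a2, b2, c2, d2))) = mat_supp (L * R) \<and>
    mat_supp (L * R) = (\<Union>P \<in> U_classes L R. R_cls L R P \<times> C_cls L R P)"
proof -
  define r where "r = r_ratio (a1, b1, c1, d1) (a2, b2, c2, d2)"
  obtain e f where chain: "a2 = a1 * e" "d1 = f * d2" "c1 = e * r" "b2 = f * r"
    using chainable_patternE[OF assms(1-3)] unfolding r_def .
  have pos: "0 < a1" "0 < b1" "0 < c2" "0 < d2" "0 < e" "0 < f" "0 < r"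
    using assms(1,2) unfolding is_pattern_def chain by auto
  have LR: "L = S_pat (a1, b1, e * r, f * d2)" "R = S_pat (a1 * e, f * r, c2, d2)"
    by (simp_all add: L_def R_def chain)
  interpret binary_factorization L R
    unfolding L_def R_def using assms(1,2) by (rule binary_factorization_S_pat) (simp add: chain ac_simps)
  have "(R_cls L R P \<times> C_cls L R P) \<inter> (R_cls L R Q \<times> C_cls L R Q) = {}"
    if "P \<in> U_classes L R" "Q \<in> U_classes L R" "P \<noteq> Q" for P Q
    using U_classes_disjoint[OF _ _ that] inner_dim col_supp_S_pat_partition row_supp_S_pat_partition
    unfolding L_def R_def by simp
  moreover have "card P = r \<and> card (R_cls L R P) = b1 \<and> card (C_cls L R P) = c2"
    if P: "P \<in> U_classes L R" for P
  proof -
    obtain i where "i \<in> P" "i < dim_col L" "R_cls L R P = col_supp L i" "C_cls L R P = row_supp R i"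
      using P by (rule U_classesE)
    moreover have "i < dim_row R" using \<open>i < dim_col L\<close> inner_dim by simp
    ultimately show ?thesis
      using card_U_classes_S_pat_chain[OF pos] P
      unfolding LR by (simp add: card_col_supp_S_pat card_row_supp_S_pat)
  qed
  moreover have "pat_comp (a1, b1, c1, d1) (a2, b2, c2, d2) = (a1, b1 * f, e * c2, d2)"
    using pos by (simp add: pat_comp_def chain mult.assoc[symmetric])
  ultimately show ?thesis
    using R_cls_C_cls mat_supp_U_mat mat_supp_mult_U_classes mat_supp_S_pat_mult_chain[OF pos(6,7)]
    unfolding r_def[symmetric] LR by simp
qed

end
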